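(* Let $H\in\mathbb{R}^{n\times d}$ have rank $h$, $\Sigma\in\mathbb{R}^{n\times n}$ symmetric positive definite, and let $\Gamma_i$ ($i\ge0$) be the empirical covariances of deterministic EKI iterates $v_{i+1}^{(j)}=v_i^{(j)}+\Gamma_iH^\top(H\Gamma_iH^\top+\Sigma)^{-1}(y-Hv_i^{(j)})$. Let $\mathbb{M}_i=(I+\Gamma_iH^\top\Sigma^{-1}H)^{-1}$ and let $\mathbb{P},\mathbb{Q},\mathbb{N}$ be as in the context. Then for every $i\ge0$: $\mathbb{M}_i$ commutes with each of $\mathbb{P},\mathbb{Q},\mathbb{N}$; $\mathbb{P}^2=\mathbb{P}$, $\mathbb{Q}^2=\mathbb{Q}$, $\mathbb{N}^2=\mathbb{N}$; $\mathbb{P}\mathbb{Q}=\mathbb{Q}\mathbb{N}=\mathbb{P}\mathbb{N}=0$; and $\mathbb{P}+\mathbb{Q}+\mathbb{N}=I$.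
   Context: $H^+=(H^\top\Sigma^{-1}H)^\dagger H^\top\Sigma^{-1}$. Let $r$ be the number of positive eigenvalues of $H\Gamma_0H^\top w=\delta\Sigma w$, and $w_1,\dots,w_n$ a basis of $\mathbb{R}^n$ with $w_k^\top\Sigma w_l$ equal to $1$ if $k=l$, $0$ otherwise, each $w_\ell$ a generalized eigenvector of $(H\Gamma_iH^\top,\Sigma)$ for every $i\ge0$ with eigenvalue $\delta_{\ell,i}$, where $w_1,\dots,w_r\in\mathsf{Ran}(\Sigma^{-1}H)$ have positive eigenvalues, $w_{r+1},\dots,w_h\in\mathsf{Ran}(\Sigma^{-1}H)$ eigenvalue zero, $w_{h+1},\dots,w_n$ a basis of $\mathsf{Ker}(H^\top)$. Let $u_\ell=\frac1{\delta_{\ell,0}}\Gamma_0H^\top w_\ell$ ($\ell\le r$), $u_\ell=H^+\Sigma w_\ell$ ($r<\ell\le h$), $U=[u_1,\dots,u_h]$, $U_{k:l}$ its columns $k$ through $l$. $\mathbb{P}=U_{1:r}U_{1:r}^\top H^\top\Sigma^{-1}H$, $\mathbb{Q}=U_{r+1:h}U_{r+1:h}^\top H^\top\Sigma^{-1}H$, $\mathbb{N}=I-\mathbb{P}-\mathbb{Q}$. *)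

theory Defs
  imports "HOL-Analysis.Analysis"
begin

definition outer :: "real^'m \<Rightarrow> real^'k \<Rightarrow> real^'k^'m" where
  "outer x y = (\<chi> i j. x $ i * y $ j)"

definition mp_pinv :: "real^'k^'m \<Rightarrow> real^'m^'k" where
  "mp_pinv A = (THE B. A ** B ** A = A \<and> B ** A ** B = B \<and>
                        transpose (A ** B) = A ** B \<and> transpose (B ** A) = B ** A)"

definition ens_mean :: "('j::finite \<Rightarrow> real^'d) \<Rightarrow> real^'d" where
  "ens_mean v = (1 / real CARD('j)) *\<^sub>R (\<Sum>j\<in>UNIV. v j)"

definition emp_cov :: "('j::finite \<Rightarrow> real^'d) \<Rightarrow> real^'d^'d" where
  "emp_cov v = (1 / real CARD('j)) *\<^sub>R
     (\<Sum>j\<in>UNIV. outer (v j - ens_mean v) (v j - ens_mean v))"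

definition spd :: "real^'n^'n \<Rightarrow> bool" where
  "spd S \<longleftrightarrow> transpose S = S \<and> (\<forall>x. x \<noteq> 0 \<longrightarrow> x \<bullet> (S *v x) > 0)"

end

theory Submission
  imports Defs
begin

text \<open>
  For \<open>l \<le> h\<close> put \<open>a\<^sub>l = H\<^sup>T w\<^sub>l\<close>. Since \<open>H u\<^sub>l = \<Sigma> w\<^sub>l\<close>, the families \<open>a\<close> and \<open>u\<close> are
  biorthogonal and \<open>A = H\<^sup>T \<Sigma>\<^sup>-\<^sup>1 H\<close> maps \<open>u\<^sub>l\<close> to \<open>a\<^sub>l\<close>; so P and Q are the sums of the
  rank-one idempotents \<open>u\<^sub>l a\<^sub>l\<^sup>T\<close> over the disjoint index sets \<open>{1..r}\<close> and \<open>{r+1..h}\<close>.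
  The deterministic EKI covariance update \<open>\<Gamma>\<^sub>i\<^sub>+\<^sub>1 = (I - K\<^sub>i H) \<Gamma>\<^sub>i (I - K\<^sub>i H)\<^sup>T\<close> keeps
  \<open>\<Gamma>\<^sub>i a\<^sub>l\<close> a multiple \<open>c u\<^sub>l\<close> of \<open>u\<^sub>l\<close> (with \<open>c \<mapsto> c / (1 + c)\<^sup>2\<close>). Hence \<open>u\<^sub>l\<close> and \<open>a\<^sub>l\<close> are
  right and left eigenvectors of \<open>\<Gamma>\<^sub>i A\<close> for the same eigenvalue, so \<open>I + \<Gamma>\<^sub>i A\<close>, and with
  it its inverse \<open>M\<^sub>i\<close>, commutes with every \<open>u\<^sub>l a\<^sub>l\<^sup>T\<close>.
\<close>

declare transpose_matrix_vector [simp del] vector_transpose_matrix [simp del]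

lemma inner_matrix_vector_transpose:
  "(A *v x) \<bullet> y = x \<bullet> (transpose A *v y)" for A :: "real^'n^'m"
  by (metis dot_lmul_matrix inner_commute transpose_matrix_vector)

lemma transpose_add: "transpose (A + B) = transpose A + transpose B"
  by (simp add: transpose_def vec_eq_iff)

lemma transpose_diff: "transpose (A - B) = transpose A - transpose (B :: 'a::ring_1^'n^'m)"
  by (simp add: transpose_def vec_eq_iff)

lemma transpose_zero [simp]: "transpose 0 = 0"
  by (simp add: transpose_def vec_eq_iff)

lemma transpose_sum: "transpose (\<Sum>i\<in>I. f i) = (\<Sum>i\<in>I. transpose (f i))"
  by (induction I rule: infinite_finite_induct) (simp_all add: transpose_add)

lemma matrix_add_rdistrib: "(A + B) ** C = A ** C + B ** C"
  by (vector matrix_matrix_mult_def sum.distrib[symmetric] field_simps)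

lemma matrix_diff_ldistrib: "A ** (B - C) = A ** B - A ** (C :: 'a::ring_1^'p^'n)"
  by (vector matrix_matrix_mult_def sum_subtractf[symmetric] field_simps)

lemma matrix_diff_rdistrib: "(A - B) ** C = A ** C - B ** (C :: 'a::ring_1^'p^'n)"
  by (vector matrix_matrix_mult_def sum_subtractf[symmetric] field_simps)

lemma sum_matrix_mult: "(\<Sum>i\<in>I. f i) ** A = (\<Sum>i\<in>I. f i ** A)"
  by (induction I rule: infinite_finite_induct) (simp_all add: matrix_add_rdistrib)

lemma matrix_mult_sum: "A ** (\<Sum>i\<in>I. f i) = (\<Sum>i\<in>I. A ** f i)"
  by (induction I rule: infinite_finite_induct) (simp_all add: matrix_add_ldistrib)

lemma sum_matrix_vector_mult: "(\<Sum>i\<in>I. f i) *v x = (\<Sum>i\<in>I. f i *v x)"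
  by (induction I rule: infinite_finite_induct) (simp_all add: matrix_vector_mult_add_rdistrib)

lemma outer_mulv: "outer x y *v z = (y \<bullet> z) *\<^sub>R x"
  by (simp add: outer_def matrix_vector_mult_def inner_vec_def vec_eq_iff sum_distrib_left mult_ac)

lemma transpose_outer: "transpose (outer x y) = outer y x"
  by (simp add: outer_def transpose_def vec_eq_iff)

lemma matrix_mult_outer: "A ** outer x y = outer (A *v x) y"
  by (simp add: outer_def matrix_matrix_mult_def matrix_vector_mult_def vec_eq_iff
      sum_distrib_left sum_distrib_right mult_ac)

lemma outer_mult_matrix: "outer x y ** A = outer x (transpose A *v y)"
  by (simp add: outer_def matrix_matrix_mult_def matrix_vector_mult_def transpose_def vec_eq_iff
      sum_distrib_left mult_ac)

lemma outer_mult_outer: "outer x y ** outer z w = (y \<bullet> z) *\<^sub>R outer x w"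
  by (simp add: outer_mult_matrix transpose_outer outer_mulv) (simp add: outer_def vec_eq_iff inner_commute)

lemma invertible_iff_ker: "invertible A \<longleftrightarrow> (\<forall>x. A *v x = 0 \<longrightarrow> x = 0)"
  for A :: "'a::field^'n^'n"
  by (simp add: invertible_left_inverse matrix_left_invertible_ker)

lemma matrix_inv_mult:
  assumes "invertible A"
  shows matrix_inv_right: "A ** matrix_inv A = mat 1" and matrix_inv_left: "matrix_inv A ** A = mat 1"
proof -
  have "A ** matrix_inv A = mat 1 \<and> matrix_inv A ** A = mat 1"
    using assms unfolding invertible_def matrix_inv_def by (rule someI_ex)
  then show "A ** matrix_inv A = mat 1" "matrix_inv A ** A = mat 1" by auto
qed

lemma matrix_inv_commute:
  assumes "invertible Y" "Y ** Z = Z ** Y"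
  shows "matrix_inv Y ** Z = Z ** matrix_inv Y"
proof -
  have "matrix_inv Y ** Z = matrix_inv Y ** (Z ** Y) ** matrix_inv Y"
    by (simp add: matrix_mul_assoc[symmetric] matrix_inv_right[OF assms(1)])
  also have "\<dots> = Z ** matrix_inv Y"
    by (simp add: assms(2)[symmetric] matrix_mul_assoc matrix_inv_left[OF assms(1)])
  finally show ?thesis .
qed

lemma transpose_matrix_inv_symmetric:
  fixes S :: "'a::field^'n^'n"
  assumes "invertible S" "transpose S = S"
  shows "transpose (matrix_inv S) = matrix_inv S"
proof -
  have "transpose (matrix_inv S) = transpose (matrix_inv S) ** (S ** matrix_inv S)"
    by (simp add: matrix_inv_right[OF assms(1)])
  also have "\<dots> = transpose (S ** matrix_inv S) ** matrix_inv S"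
    by (simp add: matrix_mul_assoc matrix_transpose_mul assms(2))
  finally show ?thesis by (simp add: matrix_inv_right[OF assms(1)])
qed

section \<open>Positive definite matrices\<close>

definition psd :: "real^'n^'n \<Rightarrow> bool" where
  "psd G \<longleftrightarrow> transpose G = G \<and> (\<forall>x. 0 \<le> x \<bullet> (G *v x))"

lemma spd_imp_invertible: "spd S \<Longrightarrow> invertible S"
  unfolding invertible_iff_ker spd_def by (metis inner_zero_right less_irrefl)

lemma spd_matrix_inv:
  fixes S :: "real^'n^'n"
  assumes "spd S"
  shows "spd (matrix_inv S)"
  unfolding spd_def
proof (intro conjI allI impI)
  have inv: "invertible S" using assms by (rule spd_imp_invertible)
  then show "transpose (matrix_inv S) = matrix_inv S"
    using assms by (simp add: spd_def transpose_matrix_inv_symmetric)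
  fix x :: "real^'n" assume "x \<noteq> 0"
  have S_Si: "S *v (matrix_inv S *v x) = x"
    by (simp add: matrix_vector_mul_assoc matrix_inv_right[OF inv])
  then have "matrix_inv S *v x \<noteq> 0" using \<open>x \<noteq> 0\<close> by auto
  then have "0 < (matrix_inv S *v x) \<bullet> (S *v (matrix_inv S *v x))"
    using assms by (simp add: spd_def)
  then show "0 < x \<bullet> (matrix_inv S *v x)" by (simp add: S_Si inner_commute)
qed

lemma spd_add_psd_congruence:
  fixes H :: "real^'d^'n"
  assumes "psd G" "spd S"
  shows "spd (H ** G ** transpose H + S)"
  unfolding spd_def
proof (intro conjI allI impI)
  show "transpose (H ** G ** transpose H + S) = H ** G ** transpose H + S"
    using assms by (simp add: psd_def spd_def transpose_add matrix_transpose_mul matrix_mul_assoc)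
  fix x :: "real^'n" assume "x \<noteq> 0"
  have "x \<bullet> ((H ** G ** transpose H) *v x) = (transpose H *v x) \<bullet> (G *v (transpose H *v x))"
    by (simp add: matrix_vector_mul_assoc[symmetric] inner_matrix_vector_transpose inner_commute)
  then have "0 \<le> x \<bullet> ((H ** G ** transpose H) *v x)" using assms(1) by (simp add: psd_def)
  then show "0 < x \<bullet> ((H ** G ** transpose H + S) *v x)"
    using assms(2) \<open>x \<noteq> 0\<close> by (simp add: spd_def matrix_vector_mult_add_rdistrib inner_add_right add_nonneg_pos)
qed

lemma invertible_one_add_psd_mult_gram:
  fixes H :: "real^'d^'n"
  assumes "psd G" "spd S"
  shows "invertible (mat 1 + G ** transpose H ** S ** H)"
  unfolding invertible_iff_ker
proof (intro allI impI)
  fix x assume "(mat 1 + G ** transpose H ** S ** H) *v x = 0"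
  then have x: "x = - (G *v (transpose H *v (S *v (H *v x))))"
    by (simp add: matrix_vector_mult_add_rdistrib matrix_vector_mul_assoc[symmetric]
        eq_neg_iff_add_eq_0)
  let ?z = "transpose H *v (S *v (H *v x))"
  have "(H *v x) \<bullet> (S *v (H *v x)) = x \<bullet> ?z"
    by (simp add: inner_matrix_vector_transpose)
  also have "\<dots> = - (?z \<bullet> (G *v ?z))"
    by (subst x) (simp add: inner_commute)
  also have "\<dots> \<le> 0" using assms(1) by (simp add: psd_def)
  finally have "H *v x = 0"
    using assms(2) unfolding spd_def by (metis linorder_not_less)
  then show "x = 0" using x by simp
qed

section \<open>Empirical covariance under the EKI update\<close>

lemma emp_cov_mulv:
  "emp_cov v *v x = (1 / real CARD('j)) *\<^sub>R (\<Sum>j\<in>UNIV. ((v j - ens_mean v) \<bullet> x) *\<^sub>R (v j - ens_mean v))"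
  for v :: "'j::finite \<Rightarrow> real^'d"
  by (simp add: emp_cov_def scaleR_matrix_vector_assoc[symmetric] sum_matrix_vector_mult outer_mulv)

lemma inner_emp_cov:
  "x \<bullet> (emp_cov v *v x) = (1 / real CARD('j)) * (\<Sum>j\<in>UNIV. ((v j - ens_mean v) \<bullet> x)\<^sup>2)"
  for v :: "'j::finite \<Rightarrow> real^'d"
  by (simp add: emp_cov_mulv inner_sum_right power2_eq_square inner_commute)

lemma psd_emp_cov: "psd (emp_cov v)"
  unfolding psd_def inner_emp_cov
  by (simp add: sum_nonneg emp_cov_def transpose_scalar transpose_sum transpose_outer)

lemma emp_cov_mulv_eq_0:
  fixes v :: "'j::finite \<Rightarrow> real^'d"
  assumes "x \<bullet> (emp_cov v *v x) = 0"
  shows "emp_cov v *v x = 0"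
proof -
  have "(\<Sum>j\<in>UNIV. ((v j - ens_mean v) \<bullet> x)\<^sup>2) = 0"
    using assms by (simp add: inner_emp_cov)
  then have "\<forall>j\<in>UNIV. ((v j - ens_mean v) \<bullet> x)\<^sup>2 = 0"
    by (simp add: sum_nonneg_eq_0_iff)
  then show ?thesis by (simp add: emp_cov_mulv)
qed

lemma emp_cov_affine:
  fixes v v' :: "'j::finite \<Rightarrow> real^'d"
  assumes "\<And>j. v' j = G *v v j + c"
  shows "emp_cov v' = G ** emp_cov v ** transpose G"
proof -
  have "(\<Sum>j\<in>UNIV. v' j) = G *v (\<Sum>j\<in>UNIV. v j) + real CARD('j) *\<^sub>R c"
    by (simp add: assms sum.distrib vec.sum sum_constant_scaleR del: sum_constant)
  then have "ens_mean v' = G *v ens_mean v + c"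
    by (simp add: ens_mean_def matrix_vector_mult_scaleR scaleR_add_right)
  then have "outer (v' j - ens_mean v') (v' j - ens_mean v')
      = G ** outer (v j - ens_mean v) (v j - ens_mean v) ** transpose G" for j
    by (simp add: assms matrix_vector_mult_diff_distrib matrix_mult_outer outer_mult_matrix)
  then show ?thesis
    by (simp add: emp_cov_def matrix_mult_sum sum_matrix_mult matrix_scalar_ac
        scalar_matrix_assoc[symmetric] scaleR_sum_right)
qed

definition kalman_gain :: "real^'d^'d \<Rightarrow> real^'d^'n \<Rightarrow> real^'n^'n \<Rightarrow> real^'n^'d" where
  "kalman_gain Gam H Sig = Gam ** transpose H ** matrix_inv (H ** Gam ** transpose H + Sig)"

lemma emp_cov_eki_step:
  fixes v v' :: "'j::finite \<Rightarrow> real^'d" and H :: "real^'d^'n"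
  assumes "\<And>j. v' j = v j + kalman_gain (emp_cov v) H Sig *v (y - H *v v j)"
  defines "G \<equiv> mat 1 - kalman_gain (emp_cov v) H Sig ** H"
  shows "emp_cov v' = G ** emp_cov v ** transpose G"
proof (rule emp_cov_affine)
  show "v' j = G *v v j + kalman_gain (emp_cov v) H Sig *v y" for j
    by (simp add: assms G_def matrix_vector_mult_diff_distrib matrix_vector_mult_diff_rdistrib
        matrix_vector_mul_assoc)
qed

lemma kalman_cov_update_eigvec:
  fixes H :: "real^'d^'n" and Sig :: "real^'n^'n" and Gam :: "real^'d^'d"
  assumes "spd Sig" "psd Gam" "w \<noteq> 0"
    and Gam_a: "Gam *v (transpose H *v w) = c *\<^sub>R u" and H_u: "H *v u = Sig *v w"
  defines "G \<equiv> mat 1 - kalman_gain Gam H Sig ** H"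
  shows "(G ** Gam ** transpose G) *v (transpose H *v w) = (c / (1 + c)\<^sup>2) *\<^sub>R u"
proof -
  define S where "S = H ** Gam ** transpose H + Sig"
  have "spd S" unfolding S_def using assms(1,2) by (rule spd_add_psd_congruence[rotated])
  then have inv: "invertible S" and S_sym: "transpose S = S"
    by (auto simp: spd_imp_invertible spd_def)
  have S_w: "S *v w = (1 + c) *\<^sub>R (Sig *v w)"
    by (simp add: S_def matrix_vector_mult_add_rdistrib matrix_vector_mul_assoc[symmetric] Gam_a
        H_u algebra_simps)
  have "1 + c \<noteq> 0"
    using inv \<open>w \<noteq> 0\<close> S_w unfolding invertible_iff_ker by force
  have scale: "x - (c / (1 + c)) *\<^sub>R x = (1 / (1 + c)) *\<^sub>R x" for x :: "real^'k"
  proof -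
    have "1 - c / (1 + c) = 1 / (1 + c)" using \<open>1 + c \<noteq> 0\<close> by (simp add: field_simps)
    then show ?thesis by (metis scaleR_diff_left scaleR_one)
  qed
  have Si_Sig_w: "matrix_inv S *v (Sig *v w) = (1 / (1 + c)) *\<^sub>R w"
  proof -
    have "w = matrix_inv S *v (S *v w)"
      by (simp add: matrix_vector_mul_assoc matrix_inv_left[OF inv])
    also have "\<dots> = (1 + c) *\<^sub>R (matrix_inv S *v (Sig *v w))"
      by (simp add: S_w matrix_vector_mult_scaleR)
    finally have "(1 / (1 + c)) *\<^sub>R w
        = (1 / (1 + c)) *\<^sub>R ((1 + c) *\<^sub>R (matrix_inv S *v (Sig *v w)))"
      by (rule arg_cong)
    then show ?thesis using \<open>1 + c \<noteq> 0\<close> by simp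
  qed
  have G_T: "transpose G = mat 1 - transpose H ** matrix_inv S ** H ** Gam"
    using assms(2) by (simp add: G_def kalman_gain_def S_def[symmetric] psd_def transpose_diff
        matrix_transpose_mul transpose_matrix_inv_symmetric[OF inv S_sym] matrix_mul_assoc)
  have G_T_a: "transpose G *v (transpose H *v w) = (1 / (1 + c)) *\<^sub>R (transpose H *v w)"
    by (simp add: G_T matrix_vector_mult_diff_rdistrib matrix_vector_mul_assoc[symmetric] Gam_a
        H_u matrix_vector_mult_scaleR Si_Sig_w scale)
  have G_u: "G *v u = (1 / (1 + c)) *\<^sub>R u"
    by (simp add: G_def kalman_gain_def S_def[symmetric] matrix_vector_mult_diff_rdistrib
        matrix_vector_mul_assoc[symmetric] H_u Si_Sig_w matrix_vector_mult_scaleR Gam_a scale)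
  show ?thesis
    by (simp add: matrix_vector_mul_assoc[symmetric] G_T_a matrix_vector_mult_scaleR Gam_a G_u
        power2_eq_square)
qed

section \<open>The Moore--Penrose pseudoinverse\<close>

definition penrose_inverse :: "real^'k^'m \<Rightarrow> real^'m^'k \<Rightarrow> bool" where
  "penrose_inverse A B \<longleftrightarrow> A ** B ** A = A \<and> B ** A ** B = B \<and>
     transpose (A ** B) = A ** B \<and> transpose (B ** A) = B ** A"

lemma penrose_inverse_unique:
  assumes "penrose_inverse A B1" "penrose_inverse A B2"
  shows "B1 = B2"
proof -
  note conds = assms[unfolded penrose_inverse_def]
  have AB: "A ** B1 = A ** B2"
  proof -
    have "A ** B1 = transpose ((A ** B2 ** A) ** B1)" using conds by simp
    also have "\<dots> = transpose (A ** B1) ** transpose (A ** B2)"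
      by (simp only: matrix_mul_assoc matrix_transpose_mul)
    also have "\<dots> = (A ** B1) ** (A ** B2)" using conds by simp
    also have "\<dots> = (A ** B1 ** A) ** B2" by (simp only: matrix_mul_assoc)
    finally show ?thesis using conds by simp
  qed
  have BA: "B1 ** A = B2 ** A"
  proof -
    have "B1 ** A = transpose (B1 ** (A ** B2 ** A))" using conds by simp
    also have "\<dots> = transpose (B2 ** A) ** transpose (B1 ** A)"
      by (simp only: matrix_mul_assoc matrix_transpose_mul)
    also have "\<dots> = (B2 ** A) ** (B1 ** A)" using conds by simp
    also have "\<dots> = B2 ** (A ** B1 ** A)" by (simp only: matrix_mul_assoc)
    finally show ?thesis using conds by simp
  qed
  have "B1 = B1 ** (A ** B1)" using conds by (simp add: matrix_mul_assoc)
  also have "\<dots> = (B2 ** A) ** B2" by (simp add: AB matrix_mul_assoc BA)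
  finally show ?thesis using conds by simp
qed

lemma mp_pinv_eqI: "penrose_inverse A B \<Longrightarrow> mp_pinv A = B"
  unfolding mp_pinv_def penrose_inverse_def[symmetric]
  by (blast intro: the_equality penrose_inverse_unique)

lemma orthogonal_projection_matrix_exists:
  fixes T :: "(real^'n) set"
  assumes "subspace T"
  obtains Pi where "transpose Pi = Pi" "\<And>x. Pi *v x \<in> T" "\<And>x. x \<in> T \<Longrightarrow> Pi *v x = x"
proof -
  obtain B where B: "B \<subseteq> T" "pairwise orthogonal B" "\<And>b. b \<in> B \<Longrightarrow> norm b = 1" "span B = T"
    using orthonormal_basis_subspace[OF assms] by metis
  define Pi where "Pi = (\<Sum>b\<in>B. outer b b)"
  have Pi_x: "Pi *v x = (\<Sum>b\<in>B. (b \<bullet> x / (b \<bullet> b)) *\<^sub>R b)" for x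
    using B(3) by (simp add: Pi_def sum_matrix_vector_mult outer_mulv inner_commute norm_eq_1)
  have "transpose Pi = Pi" by (simp add: Pi_def transpose_sum transpose_outer)
  moreover have Pi_T: "Pi *v x \<in> T" for x
    unfolding Pi_x B(4)[symmetric] by (intro span_sum span_mul span_base)
  moreover have "Pi *v x = x" if "x \<in> T" for x
  proof -
    have "x - Pi *v x \<in> span B"
      using that Pi_T B(4) assms by (simp add: subspace_diff)
    then have "orthogonal (x - Pi *v x) (x - Pi *v x)"
      using Gram_Schmidt_step[OF B(2)] by (simp add: Pi_x)
    then show ?thesis by (metis orthogonal_self eq_iff_diff_eq_0)
  qed
  ultimately show ?thesis using that by blast
qed

lemma penrose_inverse_exists_symmetric:
  fixes A :: "real^'n^'n"
  assumes A_sym: "transpose A = A"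
  obtains B where "penrose_inverse A B"
proof -
  \<comment> \<open>With \<open>Pi\<close> the orthogonal projection onto the range of \<open>A\<close>, the matrix
      \<open>C = A + (I - Pi)\<close> is invertible and \<open>C\<^sup>-\<^sup>1 Pi\<close> is the pseudoinverse.\<close>
  have "subspace (range ((*v) A))" by (simp add: subspace_UNIV linear_subspace_image)
  then obtain Pi where Pi_sym: "transpose Pi = Pi" and Pi_ran: "\<And>x. Pi *v x \<in> range ((*v) A)"
    and Pi_id: "\<And>x. x \<in> range ((*v) A) \<Longrightarrow> Pi *v x = x"
    by (rule orthogonal_projection_matrix_exists) blast
  have Pi_Pi: "Pi ** Pi = Pi" and Pi_A: "Pi ** A = A"
    by (simp_all add: matrix_eq matrix_vector_mul_assoc[symmetric] Pi_ran Pi_id)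
  have A_Pi: "A ** Pi = A"
    using arg_cong[OF Pi_A, of transpose] by (simp add: matrix_transpose_mul Pi_sym A_sym)
  define C where "C = A + (mat 1 - Pi)"
  have Pi_C: "Pi ** C = A" and C_Pi: "C ** Pi = A"
    by (simp_all add: C_def matrix_add_ldistrib matrix_add_rdistrib matrix_diff_ldistrib
        matrix_diff_rdistrib Pi_Pi Pi_A A_Pi)
  have "invertible C"
    unfolding invertible_iff_ker
  proof (intro allI impI)
    fix x assume "C *v x = 0"
    then have Ax: "A *v x = 0"
      using Pi_C by (metis matrix_vector_mul_assoc matrix_vector_mult_0_right)
    then have "x = Pi *v x"
      using \<open>C *v x = 0\<close> by (simp add: C_def matrix_vector_mult_add_rdistrib
          matrix_vector_mult_diff_rdistrib)
    then obtain z where "x = A *v z" using Pi_ran by (metis imageE)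
    then have "x \<bullet> x = z \<bullet> (A *v x)"
      by (simp add: inner_matrix_vector_transpose A_sym)
    then show "x = 0" using Ax by simp
  qed
  define Ci where "Ci = matrix_inv C"
  have Ci_A: "Ci ** A = Pi"
    by (metis C_Pi Ci_def \<open>invertible C\<close> matrix_inv_left matrix_mul_assoc matrix_mul_lid)
  have A_Ci: "A ** Ci = Pi"
    by (metis Pi_C Ci_def \<open>invertible C\<close> matrix_inv_right matrix_mul_assoc matrix_mul_rid)
  have AB: "A ** (Ci ** Pi) = Pi" by (simp add: matrix_mul_assoc A_Ci Pi_Pi)
  have BA: "Ci ** Pi ** A = Pi" by (simp add: matrix_mul_assoc[symmetric] Pi_A Ci_A)
  have "Ci ** Pi ** A ** (Ci ** Pi) = Ci ** Pi"
    by (simp add: BA matrix_mul_assoc[symmetric] AB) (simp add: Pi_Pi)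
  then have "penrose_inverse A (Ci ** Pi)"
    unfolding penrose_inverse_def using AB BA Pi_A Pi_sym by (simp add: matrix_mul_assoc)
  then show ?thesis by (rule that)
qed

lemma penrose_inverse_mp_pinv_symmetric:
  fixes A :: "real^'n^'n"
  assumes "transpose A = A"
  shows "penrose_inverse A (mp_pinv A)"
  using penrose_inverse_exists_symmetric[OF assms] by (metis mp_pinv_eqI)

lemma weighted_pinv_generalized_inverse:
  fixes H :: "real^'d^'n"
  assumes "spd S"
  shows "H ** (mp_pinv (transpose H ** S ** H) ** transpose H ** S) ** H = H"
proof -
  define A where "A = transpose H ** S ** H"
  have "transpose A = A"
    using assms by (simp add: A_def spd_def matrix_transpose_mul matrix_mul_assoc)
  then have ABA: "A ** mp_pinv A ** A = A"
    by (auto dest: penrose_inverse_mp_pinv_symmetric simp: penrose_inverse_def)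
  have "H *v (mp_pinv A *v (A *v x)) = H *v x" for x
  proof -
    \<comment> \<open>\<open>A\<close> and \<open>H\<close> have the same kernel because \<open>S\<close> is positive definite.\<close>
    let ?y = "mp_pinv A *v (A *v x) - x"
    have "A *v ?y = 0"
      by (simp add: matrix_vector_mult_diff_distrib matrix_vector_mul_assoc matrix_mul_assoc ABA)
    then have "(H *v ?y) \<bullet> (S *v (H *v ?y)) = 0"
      by (metis A_def inner_matrix_vector_transpose inner_zero_right matrix_vector_mul_assoc)
    then have "H *v ?y = 0"
      using assms unfolding spd_def by (metis less_irrefl)
    then show ?thesis by (simp add: matrix_vector_mult_diff_distrib)
  qed
  then show ?thesis
    by (simp add: matrix_eq A_def matrix_vector_mul_assoc matrix_mul_assoc)
qed

section \<open>Biorthogonal rank-one projections\<close>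

lemma biorthogonal_outer_sum_mult:
  assumes "finite K" "finite L"
    and "\<And>k l. k \<in> K \<Longrightarrow> l \<in> L \<Longrightarrow> a k \<bullet> u l = (if k = l then 1 else 0)"
  shows "(\<Sum>k\<in>K. outer (u k) (a k)) ** (\<Sum>l\<in>L. outer (u l) (a l))
       = (\<Sum>k\<in>K \<inter> L. outer (u k) (a k))"
proof -
  have "(\<Sum>k\<in>K. outer (u k) (a k)) ** (\<Sum>l\<in>L. outer (u l) (a l))
      = (\<Sum>k\<in>K. \<Sum>l\<in>L. (if k = l then 1 else 0) *\<^sub>R outer (u k) (a l))"
    using assms(3) by (simp add: matrix_mult_sum sum_matrix_mult outer_mult_outer) (rule sum.swap)
  also have "\<dots> = (\<Sum>k\<in>K. if k \<in> L then outer (u k) (a k) else 0)"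
    using assms(2) by (simp add: if_distrib[of "\<lambda>t. t *\<^sub>R _"] sum.delta cong: if_cong)
  also have "\<dots> = (\<Sum>k\<in>K \<inter> L. outer (u k) (a k))"
    using assms(1) by (simp add: sum.inter_restrict)
  finally show ?thesis .
qed

lemma outer_sum_commute:
  assumes "\<And>k. k \<in> K \<Longrightarrow> X *v u k = c k *\<^sub>R u k"
    and "\<And>k. k \<in> K \<Longrightarrow> transpose X *v a k = c k *\<^sub>R a k"
  shows "X ** (\<Sum>k\<in>K. outer (u k) (a k)) = (\<Sum>k\<in>K. outer (u k) (a k)) ** X"
  using assms
  by (simp add: matrix_mult_sum sum_matrix_mult matrix_mult_outer outer_mult_matrix)
    (simp add: outer_def vec_eq_iff mult_ac)

lemma complementary_idempotents:
  fixes P Q :: "'a::ring_1^'n^'n"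
  assumes "P ** P = P" "Q ** Q = Q" "P ** Q = 0" "Q ** P = 0"
  shows "(mat 1 - P - Q) ** (mat 1 - P - Q) = mat 1 - P - Q"
    and "P ** (mat 1 - P - Q) = 0" and "Q ** (mat 1 - P - Q) = 0"
  using assms by (simp_all add: matrix_diff_ldistrib matrix_diff_rdistrib)

section \<open>The EKI eigenbasis\<close>

locale eki_eigenbasis =
  fixes H :: "real^'d^'n"
    and Sig :: "real^'n^'n"
    and y :: "real^'n"
    and v :: "nat \<Rightarrow> 'j::finite \<Rightarrow> real^'d"
    and w :: "nat \<Rightarrow> real^'n"
    and \<delta> :: "nat \<Rightarrow> nat \<Rightarrow> real"
    and r h :: nat
    and Sinv :: "real^'n^'n" and Hplus :: "real^'n^'d" and u :: "nat \<Rightarrow> real^'d"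
  assumes Sig_spd: "spd Sig"
    and EKI: "\<And>i j. v (Suc i) j = v i j
        + (emp_cov (v i) ** transpose H
             ** matrix_inv (H ** emp_cov (v i) ** transpose H + Sig)) *v (y - H *v v i j)"
    and w_orth: "\<And>k l. k \<in> {1..CARD('n)} \<Longrightarrow> l \<in> {1..CARD('n)} \<Longrightarrow>
        w k \<bullet> (Sig *v w l) = (if k = l then 1 else 0)"
    and w_eig: "\<And>l i. l \<in> {1..CARD('n)} \<Longrightarrow>
        (H ** emp_cov (v i) ** transpose H) *v w l = \<delta> l i *\<^sub>R (Sig *v w l)"
    and h_le_n: "h \<le> CARD('n)"
    and w_ran: "\<And>l. l \<in> {1..h} \<Longrightarrow> w l \<in> range (\<lambda>x. (matrix_inv Sig ** H) *v x)"
    and w_pos: "\<And>l. l \<in> {1..r} \<Longrightarrow> \<delta> l 0 > 0"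
    and w_zero: "\<And>l. l \<in> {r+1..h} \<Longrightarrow> \<delta> l 0 = 0"
    and Sinv_def: "Sinv = matrix_inv Sig"
    and Hplus_def: "Hplus = mp_pinv (transpose H ** Sinv ** H) ** transpose H ** Sinv"
    and u_def: "u = (\<lambda>l. if l \<le> r then (1 / \<delta> l 0) *\<^sub>R ((emp_cov (v 0) ** transpose H) *v w l)
                  else Hplus *v (Sig *v w l))"
begin

lemma spd_Sinv: "spd Sinv"
  using Sig_spd by (simp add: Sinv_def spd_matrix_inv)

lemma Sig_mulv_Sinv: "Sig *v (Sinv *v x) = x"
  using Sig_spd by (simp add: Sinv_def matrix_vector_mul_assoc matrix_inv_right spd_imp_invertible)

lemma Sinv_mulv_Sig: "Sinv *v (Sig *v x) = x"
  using Sig_spd by (simp add: Sinv_def matrix_vector_mul_assoc matrix_inv_left spd_imp_invertible)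

lemma H_mulv_u:
  assumes l: "l \<in> {1..h}"
  shows "H *v u l = Sig *v w l"
proof (cases "l \<le> r")
  case True
  then have "\<delta> l 0 \<noteq> 0" using w_pos l by fastforce
  then show ?thesis
    using True w_eig[of l 0] l h_le_n
    by (simp add: u_def matrix_vector_mult_scaleR matrix_vector_mul_assoc matrix_mul_assoc)
next
  case False
  obtain x where "w l = Sinv *v (H *v x)"
    using w_ran[OF l] by (auto simp: Sinv_def matrix_vector_mul_assoc)
  then have "Sig *v w l = H *v x" by (simp add: Sig_mulv_Sinv)
  moreover have "H ** Hplus ** H = H"
    unfolding Hplus_def using weighted_pinv_generalized_inverse[OF spd_Sinv, of H]
    by (simp add: matrix_mul_assoc)
  ultimately show ?thesis
    using False by (metis u_def matrix_vector_mul_assoc)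
qed

lemma w_nonzero: "l \<in> {1..h} \<Longrightarrow> w l \<noteq> 0"
  using w_orth[of l l] h_le_n by auto

lemma inner_Ht_w_u:
  assumes "k \<in> {1..h}" "l \<in> {1..h}"
  shows "(transpose H *v w k) \<bullet> u l = (if k = l then 1 else 0)"
  using assms w_orth h_le_n by (simp add: inner_matrix_vector_transpose H_mulv_u)

lemma gram_mulv_u: "l \<in> {1..h} \<Longrightarrow> (transpose H ** Sinv ** H) *v u l = transpose H *v w l"
  by (simp add: matrix_vector_mul_assoc[symmetric] H_mulv_u Sinv_mulv_Sig)

lemma emp_cov_mulv_Ht_w:
  assumes l: "l \<in> {1..h}"
  shows "\<exists>c. emp_cov (v i) *v (transpose H *v w l) = c *\<^sub>R u l"
proof (induction i)
  case 0
  show ?case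
  proof (cases "l \<le> r")
    case True
    then have "\<delta> l 0 \<noteq> 0" using w_pos l by fastforce
    then have "emp_cov (v 0) *v (transpose H *v w l) = \<delta> l 0 *\<^sub>R u l"
      using True by (simp add: u_def matrix_vector_mul_assoc)
    then show ?thesis by blast
  next
    case False
    then have "(transpose H *v w l) \<bullet> (emp_cov (v 0) *v (transpose H *v w l)) = 0"
      using w_eig[of l 0] w_zero[of l] l h_le_n
      by (simp add: inner_matrix_vector_transpose matrix_vector_mul_assoc matrix_mul_assoc)
    then have "emp_cov (v 0) *v (transpose H *v w l) = 0 *\<^sub>R u l"
      by (simp add: emp_cov_mulv_eq_0)
    then show ?thesis by blast
  qed
next
  case (Suc i)
  then obtain c where c: "emp_cov (v i) *v (transpose H *v w l) = c *\<^sub>R u l" by blast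
  have step: "emp_cov (v (Suc i)) = (mat 1 - kalman_gain (emp_cov (v i)) H Sig ** H)
      ** emp_cov (v i) ** transpose (mat 1 - kalman_gain (emp_cov (v i)) H Sig ** H)"
    by (rule emp_cov_eki_step) (simp add: EKI kalman_gain_def)
  show ?case
    using kalman_cov_update_eigvec[OF Sig_spd psd_emp_cov w_nonzero[OF l] c H_mulv_u[OF l]]
    unfolding step by blast
qed

definition spectral_proj :: "nat set \<Rightarrow> real^'d^'d" where
  "spectral_proj K = (\<Sum>l\<in>K. outer (u l) (transpose H *v w l))"

lemma spectral_proj_mult:
  assumes "K \<subseteq> {1..h}" "L \<subseteq> {1..h}"
  shows "spectral_proj K ** spectral_proj L = spectral_proj (K \<inter> L)"
  unfolding spectral_proj_def
proof (rule biorthogonal_outer_sum_mult)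
  show "finite K" "finite L" using assms finite_subset by blast+
  show "(transpose H *v w k) \<bullet> u l = (if k = l then 1 else 0)" if "k \<in> K" "l \<in> L" for k l
    using assms that by (intro inner_Ht_w_u) auto
qed

lemma gram_sum_outer:
  assumes "K \<subseteq> {1..h}"
  shows "(\<Sum>l\<in>K. outer (u l) (u l)) ** transpose H ** Sinv ** H = spectral_proj K"
proof -
  have "transpose (transpose H ** Sinv ** H) = transpose H ** Sinv ** H"
    using spd_Sinv by (simp add: spd_def matrix_transpose_mul matrix_mul_assoc)
  then have "outer (u l) (u l) ** (transpose H ** Sinv ** H) = outer (u l) (transpose H *v w l)"
    if "l \<in> K" for l
    using that assms gram_mulv_u[of l] by (auto simp: outer_mult_matrix)
  moreover have "(\<Sum>l\<in>K. outer (u l) (u l)) ** transpose H ** Sinv ** H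
      = (\<Sum>l\<in>K. outer (u l) (u l) ** (transpose H ** Sinv ** H))"
    by (simp add: matrix_mul_assoc sum_matrix_mult)
  ultimately show ?thesis by (simp add: spectral_proj_def)
qed

lemma update_commute_spectral_proj:
  fixes i :: nat
  assumes "K \<subseteq> {1..h}"
  defines "X \<equiv> emp_cov (v i) ** transpose H ** Sinv ** H"
  shows "(mat 1 + X) ** spectral_proj K = spectral_proj K ** (mat 1 + X)"
proof -
  have "\<forall>l\<in>{1..h}. \<exists>c. emp_cov (v i) *v (transpose H *v w l) = c *\<^sub>R u l"
    using emp_cov_mulv_Ht_w by blast
  from bchoice[OF this] obtain c where c: "\<And>l. l \<in> {1..h} \<Longrightarrow> emp_cov (v i) *v (transpose H *v w l) = c l *\<^sub>R u l"
    by blast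
  have "transpose X = transpose H ** Sinv ** H ** emp_cov (v i)"
    using spd_Sinv psd_emp_cov[of "v i"]
    by (simp add: X_def spd_def psd_def matrix_transpose_mul matrix_mul_assoc)
  then have "X ** spectral_proj K = spectral_proj K ** X"
    using assms(1) c gram_mulv_u unfolding spectral_proj_def
    by (intro outer_sum_commute[where c = c])
      (auto simp: X_def matrix_vector_mul_assoc[symmetric] matrix_vector_mult_scaleR)
  then show ?thesis
    by (simp add: matrix_add_ldistrib matrix_add_rdistrib)
qed

end

theorem proposition3p15:
  fixes H :: "real^'d^'n"
    and Sig :: "real^'n^'n"
    and y :: "real^'n"
    and v :: "nat \<Rightarrow> 'j::finite \<Rightarrow> real^'d"
    and w :: "nat \<Rightarrow> real^'n"
    and \<delta> :: "nat \<Rightarrow> nat \<Rightarrow> real"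
    and r h :: nat
    and Sinv :: "real^'n^'n" and Hplus :: "real^'n^'d" and u :: "nat \<Rightarrow> real^'d"
    and P Q N :: "real^'d^'d" and M :: "nat \<Rightarrow> real^'d^'d"
  assumes rankH: "rank H = h"
    and Sig_spd: "spd Sig"
    and EKI: "\<And>i j. v (Suc i) j = v i j
        + (emp_cov (v i) ** transpose H
             ** matrix_inv (H ** emp_cov (v i) ** transpose H + Sig)) *v (y - H *v v i j)"
    and w_basis: "span (w ` {1..CARD('n)}) = UNIV"
    and w_orth: "\<And>k l. k \<in> {1..CARD('n)} \<Longrightarrow> l \<in> {1..CARD('n)} \<Longrightarrow>
        w k \<bullet> (Sig *v w l) = (if k = l then 1 else 0)"
    and w_eig: "\<And>l i. l \<in> {1..CARD('n)} \<Longrightarrow>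
        (H ** emp_cov (v i) ** transpose H) *v w l = \<delta> l i *\<^sub>R (Sig *v w l)"
    and r_def: "r = card {l \<in> {1..CARD('n)}. \<delta> l 0 > 0}"
    and r_le_h: "r \<le> h" and h_le_n: "h \<le> CARD('n)"
    and w_ran: "\<And>l. l \<in> {1..h} \<Longrightarrow> w l \<in> range (\<lambda>x. (matrix_inv Sig ** H) *v x)"
    and w_pos: "\<And>l. l \<in> {1..r} \<Longrightarrow> \<delta> l 0 > 0"
    and w_zero: "\<And>l. l \<in> {r+1..h} \<Longrightarrow> \<delta> l 0 = 0"
    and w_ker: "span (w ` {h+1..CARD('n)}) = {x. transpose H *v x = 0}"
    and Sinv_def: "Sinv = matrix_inv Sig"
    and Hplus_def: "Hplus = mp_pinv (transpose H ** Sinv ** H) ** transpose H ** Sinv"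
    and u_def: "u = (\<lambda>l. if l \<le> r then (1 / \<delta> l 0) *\<^sub>R ((emp_cov (v 0) ** transpose H) *v w l)
                  else Hplus *v (Sig *v w l))"
    and P_def: "P = (\<Sum>l\<in>{1..r}. outer (u l) (u l)) ** transpose H ** Sinv ** H"
    and Q_def: "Q = (\<Sum>l\<in>{r+1..h}. outer (u l) (u l)) ** transpose H ** Sinv ** H"
    and N_def: "N = mat 1 - P - Q"
    and M_def: "M = (\<lambda>i. matrix_inv (mat 1 + emp_cov (v i) ** transpose H ** Sinv ** H))"
  shows "\<forall>i. M i ** P = P ** M i \<and> M i ** Q = Q ** M i \<and> M i ** N = N ** M i
           \<and> P ** P = P \<and> Q ** Q = Q \<and> N ** N = N
           \<and> P ** Q = 0 \<and> Q ** N = 0 \<and> P ** N = 0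
           \<and> P + Q + N = mat 1"
proof -
  interpret eki_eigenbasis H Sig y v w \<delta> r h Sinv Hplus u
    by (unfold_locales; fact assms)
  have P: "P = spectral_proj {1..r}" and Q: "Q = spectral_proj {r+1..h}"
    using r_le_h by (simp_all add: P_def Q_def gram_sum_outer)
  have ranges: "{1..r} \<subseteq> {1..h}" "{r+1..h} \<subseteq> {1..h}" using r_le_h by auto
  moreover have "{1..r} \<inter> {r+1..h} = {}" "{r+1..h} \<inter> {1..r} = {}" by auto
  ultimately have PQ: "P ** P = P" "Q ** Q = Q" "P ** Q = 0" "Q ** P = 0"
    by (simp_all add: P Q spectral_proj_mult) (simp_all add: spectral_proj_def)
  have "M i ** P = P ** M i \<and> M i ** Q = Q ** M i" for i
    unfolding M_def P Q
    using invertible_one_add_psd_mult_gram[OF psd_emp_cov spd_Sinv]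
    by (intro conjI matrix_inv_commute update_commute_spectral_proj ranges)
  then show ?thesis
    using PQ complementary_idempotents[OF PQ]
    by (simp add: N_def matrix_diff_ldistrib matrix_diff_rdistrib)
qed

end
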